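(* We have $\mathcal{B}(\mathbb{C}_+)\subset\mathcal{A}(\mathbb{C}_+)$ and $\mathcal{B}_0(\mathbb{C}_+)\subset\mathcal{A}_0(\mathbb{C}_+)$. Moreover there exists a constant $K>0$ such that $\|\varphi\|_{\mathcal{A}}\le K\|\varphi\|_{\mathcal{B}}$ for all $\varphi\in\mathcal{B}(\mathbb{C}_+)$.
   Context: Fourier transform $\widehat f(u)=\int f(t)e^{-itu}dt$; $H^1(\mathbb{R})=\{h\in L^1:\widehat h(u)=0\ \forall u\le0\}$. $\mathcal{A}_0(\mathbb{R})$ (resp. $\mathcal{A}(\mathbb{R})$): functions $F=\sum_kf_k\star h_k$ (pointwise) with $(f_k)$ in $C_0(\mathbb{R})$ (resp. $BUC(\mathbb{R})$), $(h_k)\subset H^1(\mathbb{R})$, $\sum\|f_k\|_\infty\|h_k\|_1<\infty$, normed by the infimum of these sums. Besov spaces: fix $\psi$ in the Schwartz class with $\mathrm{supp}\,\psi\subset[\frac12,2]$, $\psi\ge0$, $\psi(t)+\psi(t/2)=1$ for $t\in[1,2]$; let $\psi_k(t)=\psi(2^{-k}t)$ and $\phi_k=\mathcal{F}^{-1}(\psi_k)$, $k\in\mathbb{Z}$. $\mathcal{B}(\mathbb{R})$ is the set of $F\in BUC(\mathbb{R})$ with $\sum_{k\in\mathbb{Z}}\|F\star\phi_k\|_\infty<\infty$ and $F=\sum_{k\in\mathbb{Z}}F\star\phi_k$, normed by $\|F\|_{\mathcal{B}}=\sum_k\|F\star\phi_k\|_\infty$; $\mathcal{B}_0(\mathbb{R})=\mathcal{B}(\mathbb{R})\cap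 C_0(\mathbb{R})$. All these functions lie in $H^\infty(\mathbb{R})$ (bounded functions with analytic Poisson extension $\mathcal{P}[F]$ to the upper half-plane); for such $F$ set $\widetilde F(z)=\mathcal{P}[F](iz)$ on $\mathbb{C}_+=\{\mathrm{Re}\,z>0\}$. $\mathcal{X}(\mathbb{C}_+)=\{\widetilde F:F\in\mathcal{X}(\mathbb{R})\}$ for $\mathcal{X}\in\{\mathcal{A},\mathcal{A}_0,\mathcal{B},\mathcal{B}_0\}$, with norms transferred from the line. *)

theory Defs
  imports "HOL-Analysis.Analysis"
begin

definition sup_norm :: "(real \<Rightarrow> complex) \<Rightarrow> real" where
  "sup_norm f = Sup (range (\<lambda>x. norm (f x)))"

definition L1_norm :: "(real \<Rightarrow> complex) \<Rightarrow> real" where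
  "L1_norm h = (LINT t|lborel. norm (h t))"

definition fourier :: "(real \<Rightarrow> complex) \<Rightarrow> real \<Rightarrow> complex" where
  "fourier f u = (LINT t|lborel. f t * cis (- (t * u)))"

definition inv_fourier :: "(real \<Rightarrow> complex) \<Rightarrow> real \<Rightarrow> complex" where
  "inv_fourier g t = complex_of_real (1 / (2 * pi)) * (LINT u|lborel. g u * cis (t * u))"

definition conv :: "(real \<Rightarrow> complex) \<Rightarrow> (real \<Rightarrow> complex) \<Rightarrow> real \<Rightarrow> complex" where
  "conv f h x = (LINT t|lborel. f (x - t) * h t)"

definition H1 :: "(real \<Rightarrow> complex) set" where
  "H1 = {h. integrable lborel h \<and> (\<forall>u\<le>0. fourier h u = 0)}"

definition BUC :: "(real \<Rightarrow> complex) set" where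
  "BUC = {f. bounded (range f) \<and> uniformly_continuous_on UNIV f}"

definition C0 :: "(real \<Rightarrow> complex) set" where
  "C0 = {f. continuous_on UNIV f \<and> (f \<longlongrightarrow> 0) at_top \<and> (f \<longlongrightarrow> 0) at_bot}"

definition A_rep :: "(real \<Rightarrow> complex) set \<Rightarrow> (real \<Rightarrow> complex)
    \<Rightarrow> (nat \<Rightarrow> real \<Rightarrow> complex) \<Rightarrow> (nat \<Rightarrow> real \<Rightarrow> complex) \<Rightarrow> bool" where
  "A_rep S F f h \<longleftrightarrow> (\<forall>k. f k \<in> S) \<and> (\<forall>k. h k \<in> H1)
     \<and> summable (\<lambda>k. sup_norm (f k) * L1_norm (h k))
     \<and> (\<forall>x. (\<lambda>k. conv (f k) (h k) x) sums F x)"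

definition A_space :: "(real \<Rightarrow> complex) set \<Rightarrow> (real \<Rightarrow> complex) set" where
  "A_space S = {F. \<exists>f h. A_rep S F f h}"

definition A_norm :: "(real \<Rightarrow> complex) set \<Rightarrow> (real \<Rightarrow> complex) \<Rightarrow> real" where
  "A_norm S F = Inf {(\<Sum>k. sup_norm (f k) * L1_norm (h k)) | f h. A_rep S F f h}"

abbreviation A_R :: "(real \<Rightarrow> complex) set" where "A_R \<equiv> A_space BUC"
abbreviation A0_R :: "(real \<Rightarrow> complex) set" where "A0_R \<equiv> A_space C0"

text \<open>The norm of A_0(R) and A(R) are both given by the infimum over the respective
  representations; only the A-norm is needed below.\<close>
abbreviation normA_R :: "(real \<Rightarrow> complex) \<Rightarrow> real" where "normA_R \<equiv> A_norm BUC"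

definition schwartz :: "(real \<Rightarrow> real) \<Rightarrow> bool" where
  "schwartz \<psi> \<longleftrightarrow> (\<forall>n x. (deriv ^^ n) \<psi> differentiable (at x))
     \<and> (\<forall>n m. \<exists>C. \<forall>t. \<bar>t ^ m * (deriv ^^ n) \<psi> t\<bar> \<le> C)"

definition admissible :: "(real \<Rightarrow> real) \<Rightarrow> bool" where
  "admissible \<psi> \<longleftrightarrow> schwartz \<psi> \<and> (\<forall>t. t \<notin> {1/2..2} \<longrightarrow> \<psi> t = 0)
     \<and> (\<forall>t. \<psi> t \<ge> 0) \<and> (\<forall>t\<in>{1..2}. \<psi> t + \<psi> (t / 2) = 1)"

definition psi_k :: "(real \<Rightarrow> real) \<Rightarrow> int \<Rightarrow> real \<Rightarrow> real" where
  "psi_k \<psi> k t = \<psi> (2 powr (- real_of_int k) * t)"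

definition phi_k :: "(real \<Rightarrow> real) \<Rightarrow> int \<Rightarrow> real \<Rightarrow> complex" where
  "phi_k \<psi> k = inv_fourier (\<lambda>u. complex_of_real (psi_k \<psi> k u))"

definition B_R :: "(real \<Rightarrow> real) \<Rightarrow> (real \<Rightarrow> complex) set" where
  "B_R \<psi> = {F. F \<in> BUC
     \<and> (\<lambda>k. sup_norm (conv F (phi_k \<psi> k))) summable_on (UNIV :: int set)
     \<and> (\<forall>x. ((\<lambda>k. conv F (phi_k \<psi> k) x) has_sum F x) (UNIV :: int set))}"

definition normB_R :: "(real \<Rightarrow> real) \<Rightarrow> (real \<Rightarrow> complex) \<Rightarrow> real" where
  "normB_R \<psi> F = (\<Sum>\<^sub>\<infinity>k\<in>(UNIV :: int set). sup_norm (conv F (phi_k \<psi> k)))"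

definition B0_R :: "(real \<Rightarrow> real) \<Rightarrow> (real \<Rightarrow> complex) set" where
  "B0_R \<psi> = B_R \<psi> \<inter> C0"

definition poisson :: "(real \<Rightarrow> complex) \<Rightarrow> complex \<Rightarrow> complex" where
  "poisson F w = (LINT t|lborel. (Im w / (pi * ((Re w - t)\<^sup>2 + (Im w)\<^sup>2))) *\<^sub>R F t)"

definition tildeF :: "(real \<Rightarrow> complex) \<Rightarrow> complex \<Rightarrow> complex" where
  "tildeF F z = (if Re z > 0 then poisson F (\<i> * z) else 0)"

definition half_space :: "(real \<Rightarrow> complex) set \<Rightarrow> (complex \<Rightarrow> complex) set" where
  "half_space X = tildeF ` X"

definition transfer_norm :: "(real \<Rightarrow> complex) set \<Rightarrow> ((real \<Rightarrow> complex) \<Rightarrow> real)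
    \<Rightarrow> (complex \<Rightarrow> complex) \<Rightarrow> real" where
  "transfer_norm X N \<phi> = Inf {N F | F. F \<in> X \<and> tildeF F = \<phi>}"

abbreviation A_C :: "(complex \<Rightarrow> complex) set" where "A_C \<equiv> half_space A_R"
abbreviation A0_C :: "(complex \<Rightarrow> complex) set" where "A0_C \<equiv> half_space A0_R"
abbreviation B_C :: "(real \<Rightarrow> real) \<Rightarrow> (complex \<Rightarrow> complex) set" where
  "B_C \<psi> \<equiv> half_space (B_R \<psi>)"
abbreviation B0_C :: "(real \<Rightarrow> real) \<Rightarrow> (complex \<Rightarrow> complex) set" where
  "B0_C \<psi> \<equiv> half_space (B0_R \<psi>)"
abbreviation normA_C :: "(complex \<Rightarrow> complex) \<Rightarrow> real" where
  "normA_C \<equiv> transfer_norm A_R normA_R"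
abbreviation normB_C :: "(real \<Rightarrow> real) \<Rightarrow> (complex \<Rightarrow> complex) \<Rightarrow> real" where
  "normB_C \<psi> \<equiv> transfer_norm (B_R \<psi>) (normB_R \<psi>)"

end

theory Submission
  imports Defs "HOL-Probability.Probability" "HOL-Library.Nat_Bijection"
begin

(* The dyadic piece F * phi_k of a Besov function F is reproduced by convolution with
   chi_k = phi_(k-1) + phi_k + phi_(k+1): the Fourier transform of chi_k is
   psi_(k-1) + psi_k + psi_(k+1), which equals 1 on the support of psi_k, the transform of
   phi_k. That transform vanishes on (-inf, 0], so chi_k lies in H1, and dilation invariance
   gives ||chi_k||_1 <= 3 ||phi_0||_1. Hence F = sum_k (F * phi_k) * chi_k is a representation
   of F in A(R) of cost at most 3 ||phi_0||_1 ||F||_B, and F * phi_k is in C0 whenever F is.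
   The half-plane norms are infima over the same preimages, so the estimate transfers.
   Integrability of phi_0 comes from two integrations by parts, and the identity
   fourier phi_k = psi_k from Fourier inversion via Gaussian summability. *)

lemma cis_measurable [measurable]: "cis \<in> borel_measurable borel"
  by (intro borel_measurable_continuous_onI continuous_intros)

lemma
  fixes g :: "real \<Rightarrow> complex"
  assumes cont: "continuous_on {a..b} g" and vanish: "\<And>u. u \<notin> {a..b} \<Longrightarrow> g u = 0"
  shows integrable_lborel_vanishing_outside_Icc: "integrable lborel g"
    and lborel_integral_vanishing_outside_Icc: "(LINT u|lborel. g u) = integral {a..b} g"
proof -
  have g_eq: "g = (\<lambda>x. indicator {a..b} x *\<^sub>R g x)"
    using vanish by (auto simp: fun_eq_iff indicator_def)
  have set_int: "set_integrable lborel {a..b} g"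
    unfolding set_integrable_def by (rule borel_integrable_compact[OF compact_Icc cont])
  then show "integrable lborel g"
    unfolding set_integrable_def by (subst g_eq)
  have "(LINT u|lborel. g u) = set_lebesgue_integral lborel {a..b} g"
    unfolding set_lebesgue_integral_def by (subst g_eq) simp
  also have "\<dots> = integral {a..b} g"
    by (rule set_borel_integral_eq_integral[OF set_int])
  finally show "(LINT u|lborel. g u) = integral {a..b} g" .
qed

lemma integrable_inverse_1_plus_square_lborel:
  "integrable lborel (\<lambda>x::real. inverse (1 + x\<^sup>2))"
  using integrable_inverse_1_plus_square unfolding set_integrable_def
  by (simp add: einterval_def)

lemma integrable_bounded_mult:
  fixes g \<phi> :: "real \<Rightarrow> complex"
  assumes [measurable]: "g \<in> borel_measurable borel" and g_bound: "\<And>t. norm (g t) \<le> M"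
    and \<phi>: "integrable lborel \<phi>"
  shows "integrable lborel (\<lambda>t. g t * \<phi> t)"
proof (rule Bochner_Integration.integrable_bound[where f="\<lambda>t. M * norm (\<phi> t)"])
  show "integrable lborel (\<lambda>t. M * norm (\<phi> t))"
    using \<phi> by simp
  have [measurable]: "\<phi> \<in> borel_measurable lborel"
    using \<phi> by auto
  show "(\<lambda>t. g t * \<phi> t) \<in> borel_measurable lborel"
    by measurable
  have "0 \<le> M"
    using g_bound[of 0] norm_ge_zero order_trans by blast
  then show "AE t in lborel. norm (g t * \<phi> t) \<le> norm (M * norm (\<phi> t))"
    by (intro AE_I2) (simp add: norm_mult mult_right_mono g_bound)
qed

lemma
  fixes \<phi> :: "real \<Rightarrow> complex"
  assumes "integrable lborel \<phi>"
  shows integrable_lborel_shift: "integrable lborel (\<lambda>r. \<phi> (r - t))"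
    and lborel_integral_norm_shift:
      "(LINT r|lborel. norm (\<phi> (r - t))) = (LINT r|lborel. norm (\<phi> r))"
  using lborel_integrable_real_affine[OF assms, of 1 "-t"]
    lborel_integral_real_affine[of 1 "\<lambda>r. norm (\<phi> r)" "-t"] by simp_all

lemma L1_norm_nonneg: "L1_norm h \<ge> 0"
  unfolding L1_norm_def by simp

lemma L1_norm_add_le:
  assumes "integrable lborel f" "integrable lborel g"
  shows "L1_norm (\<lambda>t. f t + g t) \<le> L1_norm f + L1_norm g"
proof -
  have "L1_norm (\<lambda>t. f t + g t) \<le> (LINT t|lborel. norm (f t) + norm (g t))"
    unfolding L1_norm_def using assms by (intro integral_mono) (auto intro: norm_triangle_ineq)
  also have "\<dots> = L1_norm f + L1_norm g"
    unfolding L1_norm_def using assms by simp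
  finally show ?thesis .
qed

lemma lborel_Fubini_product_bound:
  fixes f :: "real \<Rightarrow> real \<Rightarrow> complex"
  assumes [measurable]: "(\<lambda>(x, y). f x y) \<in> borel_measurable (lborel \<Otimes>\<^sub>M lborel)"
    and a: "integrable lborel a" and b: "integrable lborel b"
    and bound: "\<And>x y. norm (f x y) \<le> a x * b y"
    and a_nonneg: "\<And>x. a x \<ge> 0" and b_nonneg: "\<And>y. b y \<ge> 0"
  shows "(LINT x|lborel. LINT y|lborel. f x y) = (LINT y|lborel. LINT x|lborel. f x y)"
proof -
  have [measurable]: "a \<in> borel_measurable lborel" "b \<in> borel_measurable lborel"
    using a b by auto
  have ab: "integrable (lborel \<Otimes>\<^sub>M lborel) (\<lambda>(x, y). a x * b y)"
  proof (rule lborel_pair.Fubini_integrable)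
    show "(\<lambda>(x, y). a x * b y) \<in> borel_measurable (lborel \<Otimes>\<^sub>M lborel)"
      by measurable
    show "integrable lborel (\<lambda>x. LINT y|lborel. norm ((\<lambda>(x, y). a x * b y) (x, y)))"
      using a by (simp add: abs_mult a_nonneg b_nonneg)
    show "AE x in lborel. integrable lborel (\<lambda>y. (\<lambda>(x, y). a x * b y) (x, y))"
      using b by simp
  qed
  have "integrable (lborel \<Otimes>\<^sub>M lborel) (\<lambda>(x, y). f x y)"
    by (rule Bochner_Integration.integrable_bound[OF ab])
       (auto simp: split_beta abs_mult a_nonneg b_nonneg bound)
  from lborel_pair.Fubini_integral[OF this] show ?thesis
    by simp
qed

lemma lborel_Fubini_fibre_bound:
  fixes f :: "real \<Rightarrow> real \<Rightarrow> complex"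
  assumes [measurable]: "(\<lambda>(x, y). f x y) \<in> borel_measurable (lborel \<Otimes>\<^sub>M lborel)"
    and a: "integrable lborel a"
    and fibre: "\<And>x. integrable lborel (\<lambda>y. f x y)"
    and bound: "\<And>x. (LINT y|lborel. norm (f x y)) \<le> a x"
  shows "(LINT x|lborel. LINT y|lborel. f x y) = (LINT y|lborel. LINT x|lborel. f x y)"
proof -
  have "(\<lambda>(x, y). norm (f x y)) \<in> borel_measurable (lborel \<Otimes>\<^sub>M lborel)"
    by measurable
  then have [measurable]: "(\<lambda>x. LINT y|lborel. norm (f x y)) \<in> borel_measurable lborel"
    using lborel.borel_measurable_lebesgue_integral[of "\<lambda>x y. norm (f x y)" lborel] by simp
  have "integrable (lborel \<Otimes>\<^sub>M lborel) (\<lambda>(x, y). f x y)"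
  proof (rule lborel_pair.Fubini_integrable)
    show "integrable lborel (\<lambda>x. LINT y|lborel. norm ((\<lambda>(x, y). f x y) (x, y)))"
      by (rule Bochner_Integration.integrable_bound[OF a]) (auto intro: order_trans[OF bound abs_ge_self])
    show "AE x in lborel. integrable lborel (\<lambda>y. (\<lambda>(x, y). f x y) (x, y))"
      using fibre by simp
  qed measurable
  from lborel_pair.Fubini_integral[OF this] show ?thesis
    by simp
qed

section \<open>Fourier inversion\<close>

lemma inv_fourier_measurable [measurable]:
  assumes [measurable]: "g \<in> borel_measurable borel"
  shows "inv_fourier g \<in> borel_measurable borel"
proof -
  have "(\<lambda>(t, u). g u * cis (t * u)) \<in> borel_measurable (borel \<Otimes>\<^sub>M lborel)"
    by measurable
  then have "(\<lambda>t. LINT u|lborel. g u * cis (t * u)) \<in> borel_measurable borel"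
    using lborel.borel_measurable_lebesgue_integral[of "\<lambda>t u. g u * cis (t * u)" borel] by simp
  then show ?thesis
    unfolding inv_fourier_def by measurable
qed

lemma fourier_add:
  assumes "integrable lborel f" "integrable lborel g"
  shows "fourier (\<lambda>t. f t + g t) u = fourier f u + fourier g u"
proof -
  have "integrable lborel (\<lambda>t. cis (- (t * u)) * h t)" if "integrable lborel h" for h
    by (rule integrable_bounded_mult[OF _ _ that, of _ 1]) auto
  then have "integrable lborel (\<lambda>t. h t * cis (- (t * u)))" if "integrable lborel h" for h
    using that by (simp add: mult.commute)
  with assms show ?thesis
    unfolding fourier_def by (simp add: distrib_right Bochner_Integration.integral_add)
qed

lemma integral_by_parts_cis:
  fixes f f' :: "real \<Rightarrow> real"
  assumes "a \<le> b" and deriv: "\<And>x. (f has_real_derivative f' x) (at x)"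
    and cont: "continuous_on {a..b} f'" and "f a = 0" "f b = 0"
  shows "integral {a..b} (\<lambda>u. of_real (f' u) * cis (t * u))
       = - (\<i> * of_real t) * integral {a..b} (\<lambda>u. of_real (f u) * cis (t * u))"
proof -
  let ?h = "\<lambda>u. complex_of_real (f u) * cis (t * u)"
  let ?A = "\<lambda>u. complex_of_real (f' u) * cis (t * u)"
  let ?B = "\<lambda>u. (\<i> * of_real t) * (complex_of_real (f u) * cis (t * u))"
  have cont_f: "continuous_on {a..b} f"
    using deriv by (meson DERIV_isCont continuous_at_imp_continuous_on)
  have "(?h has_vector_derivative (?A x + ?B x)) (at x within {a..b})" for x
  proof -
    have "((\<lambda>u. cis (t * u)) has_derivative (\<lambda>h. (t * h) *\<^sub>R (\<i> * cis (t * x))))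
        (at x within {a..b})"
      by (intro has_derivative_cis derivative_intros)
    then have cis_deriv: "((\<lambda>u. cis (t * u)) has_vector_derivative (of_real t * (\<i> * cis (t * x))))
        (at x within {a..b})"
      unfolding has_vector_derivative_def
      by (rule has_derivative_eq_rhs) (auto simp: fun_eq_iff scaleR_conv_of_real)
    have f_deriv: "((\<lambda>u. complex_of_real (f u)) has_vector_derivative of_real (f' x))
        (at x within {a..b})"
      by (rule has_vector_derivative_of_real) (use deriv[of x] has_field_derivative_at_within in blast)
    from has_vector_derivative_mult[OF f_deriv cis_deriv] show ?thesis
      by (simp add: algebra_simps)
  qed
  then have "((\<lambda>x. ?A x + ?B x) has_integral (?h b - ?h a)) {a..b}"
    by (intro fundamental_theorem_of_calculus \<open>a \<le> b\<close>) auto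
  then have "integral {a..b} (\<lambda>x. ?A x + ?B x) = 0"
    using \<open>f a = 0\<close> \<open>f b = 0\<close> by (simp add: integral_unique)
  moreover have "integral {a..b} (\<lambda>x. ?A x + ?B x) = integral {a..b} ?A + integral {a..b} ?B"
    by (intro integral_add integrable_continuous_interval continuous_intros cont cont_f)
  moreover have "integral {a..b} ?B = (\<i> * of_real t) * integral {a..b} (\<lambda>u. of_real (f u) * cis (t * u))"
    by (simp add: integral_mult_right)
  ultimately show ?thesis
    by (simp add: eq_neg_iff_add_eq_0)
qed

lemma lborel_integral_cis_std_gaussian:
  "(LINT x|lborel. cis (s * x) * complex_of_real (exp (- (x\<^sup>2) / 2)))
     = complex_of_real (sqrt (2 * pi) * exp (- (s\<^sup>2) / 2))"
proof -
  have "char std_normal_distribution s = complex_of_real (exp (- (s\<^sup>2) / 2))"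
    using char_std_normal_distribution by simp
  then have "(LINT x|lborel. std_normal_density x *\<^sub>R cis (s * x)) = complex_of_real (exp (- (s\<^sup>2) / 2))"
    unfolding char_def cis_conv_exp[symmetric]
    by (subst (asm) integral_density) (auto simp: normal_density_nonneg)
  then have "complex_of_real (1 / sqrt (2 * pi))
      * (LINT x|lborel. cis (s * x) * complex_of_real (exp (- (x\<^sup>2) / 2)))
      = complex_of_real (exp (- (s\<^sup>2) / 2))"
    by (simp add: std_normal_density_def scaleR_conv_of_real mult_ac)
  then show ?thesis
    by (simp add: field_simps)
qed

lemma lborel_integral_cis_gaussian:
  fixes e :: real
  assumes e: "e > 0"
  shows "(LINT t|lborel. cis (t * a) * complex_of_real (exp (- ((e * t)\<^sup>2) / 2)))
     = complex_of_real (sqrt (2 * pi) / e * exp (- ((a / e)\<^sup>2) / 2))"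
proof -
  have "(LINT x|lborel. cis ((a / e) * x) * complex_of_real (exp (- (x\<^sup>2) / 2)))
      = e *\<^sub>R (LINT t|lborel. cis ((a / e) * (0 + e * t)) * complex_of_real (exp (- ((0 + e * t)\<^sup>2) / 2)))"
    using lborel_integral_real_affine[of e "\<lambda>x. cis ((a / e) * x) * complex_of_real (exp (- (x\<^sup>2) / 2))" 0] e
    by simp
  also have "(\<lambda>t. cis ((a / e) * (0 + e * t)) * complex_of_real (exp (- ((0 + e * t)\<^sup>2) / 2)))
      = (\<lambda>t. cis (t * a) * complex_of_real (exp (- ((e * t)\<^sup>2) / 2)))"
    using e by (auto simp: fun_eq_iff field_simps)
  finally have "e *\<^sub>R (LINT t|lborel. cis (t * a) * complex_of_real (exp (- ((e * t)\<^sup>2) / 2)))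
      = complex_of_real (sqrt (2 * pi) * exp (- ((a / e)\<^sup>2) / 2))"
    using lborel_integral_cis_std_gaussian[of "a / e"] by simp
  then show ?thesis
    using e by (simp add: scaleR_conv_of_real field_simps)
qed

lemma integrable_gaussian:
  fixes e :: real
  assumes "e > 0"
  shows "integrable lborel (\<lambda>t. exp (- ((e * t)\<^sup>2) / 2))"
proof -
  have "integrable lborel (\<lambda>x. sqrt (2 * pi) * std_normal_density x)"
    using integrable_normal_density[of 0 1] by simp
  then have "integrable lborel (\<lambda>t. sqrt (2 * pi) * std_normal_density (0 + e * t))"
    using lborel_integrable_real_affine[of "\<lambda>x. sqrt (2 * pi) * std_normal_density x" e 0] assms
    by simp
  then show ?thesis
    by (simp add: std_normal_density_def)
qed

text \<open>Fubini moves the Gaussian factor onto \<open>g\<close>, where its Fourier transform becomes a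
  normal density of width \<open>e\<close>.\<close>
lemma gaussian_regularised_fourier_inv_fourier:
  fixes g :: "real \<Rightarrow> complex" and e :: real
  assumes [measurable]: "g \<in> borel_measurable borel" and g: "integrable lborel g"
    and e: "e > 0"
  shows "(LINT t|lborel. inv_fourier g t * cis (- (t * v)) * complex_of_real (exp (- ((e * t)\<^sup>2) / 2)))
     = (LINT w|lborel. g (v + e * w) * complex_of_real (std_normal_density w))"
proof -
  let ?E = "\<lambda>t. exp (- ((e * t)\<^sup>2) / 2)"
  let ?H = "\<lambda>t u. g u * cis (t * (u - v)) * complex_of_real (?E t)"
  let ?c = "complex_of_real (1 / (2 * pi))"
  have inner: "inv_fourier g t * cis (- (t * v)) * complex_of_real (?E t) = ?c * (LINT u|lborel. ?H t u)"
    for t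
  proof -
    have "(LINT u|lborel. g u * cis (t * u)) * (cis (- (t * v)) * complex_of_real (?E t))
        = (LINT u|lborel. g u * cis (t * u) * (cis (- (t * v)) * complex_of_real (?E t)))"
      by simp
    also have "\<dots> = (LINT u|lborel. ?H t u)"
      by (rule Bochner_Integration.integral_cong) (auto simp: cis_mult mult_ac right_diff_distrib)
    finally show ?thesis
      unfolding inv_fourier_def by (simp add: mult_ac)
  qed
  have swap: "(LINT t|lborel. LINT u|lborel. ?H t u) = (LINT u|lborel. LINT t|lborel. ?H t u)"
    by (rule lborel_Fubini_product_bound[where a="?E" and b="\<lambda>u. norm (g u)"])
       (use g integrable_gaussian[OF e] in \<open>auto simp: norm_mult\<close>)
  have sqrt_ratio: "sqrt (2 * pi) / (2 * pi) = 1 / sqrt (2 * pi)"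
  proof -
    have "sqrt (2 * pi) / (2 * pi) = sqrt (2 * pi) / (sqrt (2 * pi) * sqrt (2 * pi))"
      by simp
    also have "\<dots> = 1 / sqrt (2 * pi)"
      by (simp add: divide_simps)
    finally show ?thesis .
  qed
  have outer: "?c * (LINT t|lborel. ?H t u)
      = g u * complex_of_real (1 / e * std_normal_density ((u - v) / e))" for u
  proof -
    have "(LINT t|lborel. ?H t u) = g u * (LINT t|lborel. cis (t * (u - v)) * complex_of_real (?E t))"
      by (simp add: mult_ac)
    also have "\<dots> = g u * complex_of_real (sqrt (2 * pi) / e * exp (- (((u - v) / e)\<^sup>2) / 2))"
      using lborel_integral_cis_gaussian[OF e, of "u - v"] by simp
    finally have "?c * (LINT t|lborel. ?H t u)
        = g u * complex_of_real (sqrt (2 * pi) / (2 * pi) * (1 / e) * exp (- (((u - v) / e)\<^sup>2) / 2))"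
      by (simp add: mult_ac)
    then show ?thesis
      unfolding sqrt_ratio std_normal_density_def by simp
  qed
  have "(LINT t|lborel. inv_fourier g t * cis (- (t * v)) * complex_of_real (?E t))
      = (LINT t|lborel. ?c * (LINT u|lborel. ?H t u))"
    by (simp only: inner)
  also have "\<dots> = ?c * (LINT t|lborel. LINT u|lborel. ?H t u)"
    by simp
  also have "\<dots> = ?c * (LINT u|lborel. LINT t|lborel. ?H t u)"
    by (simp only: swap)
  also have "\<dots> = (LINT u|lborel. ?c * (LINT t|lborel. ?H t u))"
    by simp
  also have "\<dots> = (LINT u|lborel. g u * complex_of_real (1 / e * std_normal_density ((u - v) / e)))"
    by (simp only: outer)
  also have "\<dots> = (LINT w|lborel. g (v + e * w) * complex_of_real (std_normal_density w))"
    using lborel_integral_real_affine[of e "\<lambda>u. g u * complex_of_real (1 / e * std_normal_density ((u - v) / e))" v] e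
    by (simp add: scaleR_conv_of_real)
  finally show ?thesis .
qed

lemma fourier_inv_fourier:
  fixes g :: "real \<Rightarrow> complex"
  assumes [measurable]: "g \<in> borel_measurable borel" and g: "integrable lborel g"
    and cont: "isCont g v" and g_bound: "\<And>u. norm (g u) \<le> M"
    and inv_g: "integrable lborel (inv_fourier g)"
  shows "fourier (inv_fourier g) v = g v"
proof -
  define e where "e n = inverse (real (Suc n))" for n
  have e_pos: "e n > 0" for n
    by (simp add: e_def)
  have e_lim: "e \<longlonglongrightarrow> 0"
    unfolding e_def by (rule LIMSEQ_inverse_real_of_nat)
  define S where "S n = (LINT t|lborel. inv_fourier g t * cis (- (t * v)) * complex_of_real (exp (- ((e n * t)\<^sup>2) / 2)))"
    for n
  have S_lim: "S \<longlonglongrightarrow> fourier (inv_fourier g) v"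
    unfolding S_def fourier_def
  proof (rule integral_dominated_convergence[where w="\<lambda>t. norm (inv_fourier g t)"])
    show "integrable lborel (\<lambda>t. norm (inv_fourier g t))"
      using inv_g by simp
    show "AE t in lborel. (\<lambda>n. inv_fourier g t * cis (- (t * v)) * complex_of_real (exp (- ((e n * t)\<^sup>2) / 2)))
            \<longlonglongrightarrow> inv_fourier g t * cis (- (t * v))"
    proof (rule AE_I2)
      fix t :: real
      have "(\<lambda>n. complex_of_real (exp (- ((e n * t)\<^sup>2) / 2))) \<longlonglongrightarrow> complex_of_real (exp (- ((0 * t)\<^sup>2) / 2))"
        by (intro tendsto_intros e_lim) auto
      from tendsto_mult_left[OF this, of "inv_fourier g t * cis (- (t * v))"]
      show "(\<lambda>n. inv_fourier g t * cis (- (t * v)) * complex_of_real (exp (- ((e n * t)\<^sup>2) / 2)))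
          \<longlonglongrightarrow> inv_fourier g t * cis (- (t * v))"
        by simp
    qed
    show "AE t in lborel. norm (inv_fourier g t * cis (- (t * v)) * complex_of_real (exp (- ((e n * t)\<^sup>2) / 2)))
        \<le> norm (inv_fourier g t)" for n
      by (rule AE_I2) (auto simp: norm_mult intro!: mult_left_le)
  qed measurable
  moreover have "(\<lambda>n. LINT w|lborel. g (v + e n * w) * complex_of_real (std_normal_density w))
       \<longlonglongrightarrow> (LINT w|lborel. g v * complex_of_real (std_normal_density w))"
  proof (rule integral_dominated_convergence[where w="\<lambda>w. M * std_normal_density w"])
    show "integrable lborel (\<lambda>w. M * std_normal_density w)"
      using integrable_normal_density[of 0 1] by simp
    show "AE w in lborel. (\<lambda>n. g (v + e n * w) * complex_of_real (std_normal_density w))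
            \<longlonglongrightarrow> g v * complex_of_real (std_normal_density w)"
    proof (rule AE_I2)
      fix w
      have "(\<lambda>n. v + e n * w) \<longlonglongrightarrow> v + 0 * w"
        by (intro tendsto_intros e_lim)
      then have "(\<lambda>n. g (v + e n * w)) \<longlonglongrightarrow> g v"
        using isCont_tendsto_compose[OF cont] by simp
      then show "(\<lambda>n. g (v + e n * w) * complex_of_real (std_normal_density w))
          \<longlonglongrightarrow> g v * complex_of_real (std_normal_density w)"
        by (intro tendsto_intros)
    qed
    show "AE w in lborel. norm (g (v + e n * w) * complex_of_real (std_normal_density w))
        \<le> M * std_normal_density w" for n
      by (rule AE_I2) (auto simp: norm_mult intro!: mult_right_mono g_bound)
  qed measurable
  moreover have "(LINT w|lborel. g v * complex_of_real (std_normal_density w)) = g v"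
    using integral_normal_density[of 1 0] by simp
  moreover have "S = (\<lambda>n. LINT w|lborel. g (v + e n * w) * complex_of_real (std_normal_density w))"
    unfolding S_def by (intro ext gaussian_regularised_fourier_inv_fourier[OF _ g e_pos]) measurable
  ultimately have "S \<longlonglongrightarrow> g v"
    by simp
  then show ?thesis
    using S_lim LIMSEQ_unique by blast
qed

section \<open>Convolution\<close>

lemma BUC_measurable: "F \<in> BUC \<Longrightarrow> F \<in> borel_measurable borel"
  unfolding BUC_def
  by (auto intro: borel_measurable_continuous_onI uniformly_continuous_imp_continuous)

lemma BUC_bounded: "F \<in> BUC \<Longrightarrow> \<exists>M. \<forall>x. norm (F x) \<le> M"
  unfolding BUC_def bounded_iff by auto

lemma sup_norm_nonneg:
  assumes "bounded (range f)"
  shows "sup_norm f \<ge> 0"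
proof -
  have "bdd_above (range (\<lambda>x. norm (f x)))"
    using assms unfolding bounded_iff by (auto intro: bdd_aboveI)
  then have "norm (f 0) \<le> sup_norm f"
    unfolding sup_norm_def by (rule cSUP_upper[of 0 UNIV, simplified])
  then show ?thesis
    using norm_ge_zero order_trans by blast
qed

lemma norm_conv_le:
  fixes F \<phi> :: "real \<Rightarrow> complex"
  assumes [measurable]: "F \<in> borel_measurable borel" and F_bound: "\<And>x. norm (F x) \<le> M"
    and \<phi>: "integrable lborel \<phi>"
  shows "norm (conv F \<phi> x) \<le> M * L1_norm \<phi>"
proof -
  have int: "integrable lborel (\<lambda>t. F (x - t) * \<phi> t)"
    by (rule integrable_bounded_mult[OF _ F_bound \<phi>]) measurable
  have "norm (conv F \<phi> x) \<le> (LINT t|lborel. norm (F (x - t) * \<phi> t))"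
    unfolding conv_def by (rule integral_norm_bound)
  also have "\<dots> \<le> (LINT t|lborel. M * norm (\<phi> t))"
    using integrable_norm[OF int] \<phi>
    by (intro integral_mono) (auto simp: norm_mult F_bound mult_right_mono)
  finally show ?thesis
    by (simp add: L1_norm_def)
qed

lemma conv_BUC:
  fixes F \<phi> :: "real \<Rightarrow> complex"
  assumes F: "F \<in> BUC" and [measurable]: "\<phi> \<in> borel_measurable borel"
    and \<phi>: "integrable lborel \<phi>"
  shows "conv F \<phi> \<in> BUC"
proof -
  have F_meas [measurable]: "F \<in> borel_measurable borel"
    by (rule BUC_measurable[OF F])
  obtain M where F_bound: "\<And>x. norm (F x) \<le> M"
    using BUC_bounded[OF F] by blast
  have unif: "uniformly_continuous_on UNIV F"
    using F by (simp add: BUC_def)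
  have "bounded (range (conv F \<phi>))"
    using norm_conv_le[OF F_meas F_bound \<phi>] by (intro boundedI) auto
  moreover have "uniformly_continuous_on UNIV (conv F \<phi>)"
    unfolding uniformly_continuous_on_def
  proof (intro allI impI)
    fix e :: real
    assume "e > 0"
    define L where "L = L1_norm \<phi>"
    have "L \<ge> 0"
      unfolding L_def by (rule L1_norm_nonneg)
    define e' where "e' = e / (L + 1)"
    have "e' > 0"
      using \<open>e > 0\<close> \<open>L \<ge> 0\<close> by (simp add: e'_def)
    then obtain d where "d > 0" and d: "\<And>x x'. dist x' x < d \<Longrightarrow> dist (F x') (F x) < e'"
      using unif unfolding uniformly_continuous_on_def by blast
    have "dist (conv F \<phi> x') (conv F \<phi> x) < e" if "dist x' x < d" for x x'
    proof -
      have int: "integrable lborel (\<lambda>t. F (y - t) * \<phi> t)" for y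
        by (rule integrable_bounded_mult[OF _ F_bound \<phi>]) measurable
      have bound: "norm (F (x' - t) - F (x - t)) \<le> e'" for t
        using d[of "x' - t" "x - t"] that by (simp add: dist_norm dist_real_def less_imp_le)
      have "dist (conv F \<phi> x') (conv F \<phi> x)
          = norm (LINT t|lborel. F (x' - t) * \<phi> t - F (x - t) * \<phi> t)"
        unfolding dist_norm conv_def using int by simp
      also have "\<dots> \<le> (LINT t|lborel. norm (F (x' - t) * \<phi> t - F (x - t) * \<phi> t))"
        by (rule integral_norm_bound)
      also have "\<dots> \<le> (LINT t|lborel. e' * norm (\<phi> t))"
      proof (rule integral_mono)
        show "integrable lborel (\<lambda>t. norm (F (x' - t) * \<phi> t - F (x - t) * \<phi> t))"
          using int by simp
        show "integrable lborel (\<lambda>t. e' * norm (\<phi> t))"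
          using \<phi> by simp
        show "norm (F (x' - t) * \<phi> t - F (x - t) * \<phi> t) \<le> e' * norm (\<phi> t)" for t
          using mult_right_mono[OF bound norm_ge_zero, of t "\<phi> t"]
          by (simp add: left_diff_distrib[symmetric] norm_mult)
      qed
      also have "\<dots> = e' * L"
        by (simp add: L_def L1_norm_def)
      also have "\<dots> < e' * (L + 1)"
        using \<open>e' > 0\<close> by simp
      also have "\<dots> = e"
        using \<open>L \<ge> 0\<close> by (simp add: e'_def)
      finally show ?thesis .
    qed
    then show "\<exists>d>0. \<forall>x\<in>UNIV. \<forall>x'\<in>UNIV. dist x' x < d \<longrightarrow> dist (conv F \<phi> x') (conv F \<phi> x) < e"
      using \<open>d > 0\<close> by auto
  qed
  ultimately show ?thesis
    by (simp add: BUC_def)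
qed

lemma conv_tendsto_0_at_top:
  fixes F \<phi> :: "real \<Rightarrow> complex"
  assumes [measurable]: "F \<in> borel_measurable borel" "\<phi> \<in> borel_measurable borel"
    and F_bound: "\<And>x. norm (F x) \<le> M" and \<phi>: "integrable lborel \<phi>"
    and c: "c = 1 \<or> c = -1" and F_lim: "((\<lambda>y. F (c * y)) \<longlongrightarrow> 0) at_top"
  shows "((\<lambda>x. conv F \<phi> (c * x)) \<longlongrightarrow> 0) at_top"
proof -
  have "((\<lambda>x. F (c * x - t) * \<phi> t) \<longlongrightarrow> 0) at_top" for t
  proof -
    have "filterlim (\<lambda>x. - (c * t) + x) at_top at_top"
      by (rule filterlim_tendsto_add_at_top[OF tendsto_const filterlim_ident])
    from filterlim_compose[OF F_lim this]
    have "((\<lambda>x. F (c * (- (c * t) + x))) \<longlongrightarrow> 0) at_top" .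
    moreover have "c * (- (c * t) + x) = c * x - t" for x
      using c by (auto simp: algebra_simps)
    ultimately show ?thesis
      by (simp add: tendsto_mult_left_zero)
  qed
  then have lim: "AE t in lborel. ((\<lambda>x. F (c * x - t) * \<phi> t) \<longlongrightarrow> 0) at_top"
    by simp
  have dom: "\<forall>\<^sub>F x in at_top. AE t in lborel. norm (F (c * x - t) * \<phi> t) \<le> M * norm (\<phi> t)"
    by (intro always_eventually allI AE_I2) (simp add: norm_mult F_bound mult_right_mono)
  have w: "integrable lborel (\<lambda>t. M * norm (\<phi> t))"
    using \<phi> by simp
  have zero: "(\<lambda>t. 0::complex) \<in> borel_measurable lborel"
    by simp
  have "\<And>x. (\<lambda>t. F (c * x - t) * \<phi> t) \<in> borel_measurable lborel"
    by measurable
  from integral_dominated_convergence_at_top[OF zero this w lim dom]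
  show ?thesis
    by (simp add: conv_def)
qed

lemma conv_C0:
  fixes F \<phi> :: "real \<Rightarrow> complex"
  assumes F: "F \<in> BUC" "F \<in> C0" and [measurable]: "\<phi> \<in> borel_measurable borel"
    and \<phi>: "integrable lborel \<phi>"
  shows "conv F \<phi> \<in> C0"
proof -
  have F_meas [measurable]: "F \<in> borel_measurable borel"
    by (rule BUC_measurable[OF F(1)])
  obtain M where F_bound: "\<And>x. norm (F x) \<le> M"
    using BUC_bounded[OF F(1)] by blast
  have "continuous_on UNIV (conv F \<phi>)"
    using conv_BUC[OF F(1) _ \<phi>] by (auto simp: BUC_def intro: uniformly_continuous_imp_continuous)
  moreover have "(conv F \<phi> \<longlongrightarrow> 0) at_top"
    using conv_tendsto_0_at_top[OF F_meas _ F_bound \<phi>, of 1] F(2) by (simp add: C0_def)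
  moreover have "((\<lambda>y. F (- y)) \<longlongrightarrow> 0) at_top"
    using F(2) filterlim_at_bot_mirror by (auto simp: C0_def)
  then have "((\<lambda>x. conv F \<phi> (- x)) \<longlongrightarrow> 0) at_top"
    using conv_tendsto_0_at_top[OF F_meas _ F_bound \<phi>, of "-1"] by simp
  then have "(conv F \<phi> \<longlongrightarrow> 0) at_bot"
    using filterlim_at_bot_mirror by blast
  ultimately show ?thesis
    by (simp add: C0_def)
qed

lemma conv_assoc:
  fixes F \<phi> h :: "real \<Rightarrow> complex"
  assumes [measurable]: "F \<in> borel_measurable borel" and F_bound: "\<And>x. norm (F x) \<le> M"
    and [measurable]: "\<phi> \<in> borel_measurable borel" and \<phi>: "integrable lborel \<phi>"
    and [measurable]: "h \<in> borel_measurable borel" and h: "integrable lborel h"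
  shows "conv (conv F \<phi>) h x = conv F (conv \<phi> h) x"
proof -
  let ?L = "LINT r|lborel. norm (\<phi> r)"
  have shift: "conv F \<phi> (x - t) = (LINT r|lborel. F (x - r) * \<phi> (r - t))" for t
    using lborel_integral_real_affine[of 1 "\<lambda>s. F (x - t - s) * \<phi> s" "-t"]
    by (simp add: conv_def)
  have fibre_bound: "(LINT r|lborel. norm (F (x - r) * \<phi> (r - t) * h t)) \<le> M * ?L * norm (h t)"
    for t
  proof -
    have int: "integrable lborel (\<lambda>r. F (x - r) * \<phi> (r - t))"
      by (rule integrable_bounded_mult[OF _ F_bound integrable_lborel_shift[OF \<phi>]]) measurable
    have "(LINT r|lborel. norm (F (x - r) * \<phi> (r - t) * h t))
        \<le> (LINT r|lborel. M * norm (\<phi> (r - t)) * norm (h t))"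
      using integrable_norm[OF int] integrable_lborel_shift[OF \<phi>, of t]
      by (intro integral_mono) (simp_all add: norm_mult F_bound mult_right_mono)
    also have "\<dots> = M * ?L * norm (h t)"
      using lborel_integral_norm_shift[OF \<phi>, of t] by simp
    finally show ?thesis .
  qed
  have "conv (conv F \<phi>) h x = (LINT t|lborel. LINT r|lborel. F (x - r) * \<phi> (r - t) * h t)"
    by (simp add: conv_def[of "conv F \<phi>"] shift)
  also have "\<dots> = (LINT r|lborel. LINT t|lborel. F (x - r) * \<phi> (r - t) * h t)"
  proof (rule lborel_Fubini_fibre_bound[OF _ _ _ fibre_bound])
    show "integrable lborel (\<lambda>t. M * ?L * norm (h t))"
      using h by simp
    show "integrable lborel (\<lambda>r. F (x - r) * \<phi> (r - t) * h t)" for t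
      using integrable_bounded_mult[OF _ F_bound integrable_lborel_shift[OF \<phi>, of t]] by simp
  qed measurable
  also have "\<dots> = conv F (conv \<phi> h) x"
    by (simp add: conv_def mult.assoc)
  finally show ?thesis .
qed

lemma conv_inv_fourier:
  fixes g h :: "real \<Rightarrow> complex"
  assumes [measurable]: "g \<in> borel_measurable borel" and g: "integrable lborel g"
    and [measurable]: "h \<in> borel_measurable borel" and h: "integrable lborel h"
    and reproducing: "\<And>u. g u * fourier h u = g u"
  shows "conv (inv_fourier g) h x = inv_fourier g x"
proof -
  let ?K = "\<lambda>t u. g u * cis ((x - t) * u) * h t"
  let ?c = "complex_of_real (1 / (2 * pi))"
  have inner: "inv_fourier g (x - t) * h t = ?c * (LINT u|lborel. ?K t u)" for t
  proof -
    have "(LINT u|lborel. g u * cis ((x - t) * u)) * h t = (LINT u|lborel. ?K t u)"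
      by simp
    then show ?thesis
      unfolding inv_fourier_def by (simp only: mult.assoc)
  qed
  have swap: "(LINT t|lborel. LINT u|lborel. ?K t u) = (LINT u|lborel. LINT t|lborel. ?K t u)"
    by (rule lborel_Fubini_product_bound[where a="\<lambda>t. norm (h t)" and b="\<lambda>u. norm (g u)"])
       (use g h in \<open>auto simp: norm_mult\<close>)
  have outer: "(LINT t|lborel. ?K t u) = g u * cis (x * u)" for u
  proof -
    have "cis ((x - t) * u) = cis (x * u) * cis (- (t * u))" for t
      by (simp add: cis_mult left_diff_distrib)
    then have "(LINT t|lborel. ?K t u) = (LINT t|lborel. (g u * cis (x * u)) * (h t * cis (- (t * u))))"
      by (intro Bochner_Integration.integral_cong) (simp_all only: mult_ac)
    also have "\<dots> = (g u * cis (x * u)) * fourier h u"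
      unfolding fourier_def by simp
    also have "\<dots> = (g u * fourier h u) * cis (x * u)"
      by (simp only: mult_ac)
    finally show ?thesis
      by (simp only: reproducing)
  qed
  have "conv (inv_fourier g) h x = ?c * (LINT t|lborel. LINT u|lborel. ?K t u)"
    unfolding conv_def inner by simp
  also have "\<dots> = inv_fourier g x"
    unfolding swap outer inv_fourier_def ..
  finally show ?thesis .
qed

section \<open>Norms of the representation spaces\<close>

lemma A_rep_cost_nonneg:
  assumes rep: "A_rep S F f h" and "S \<subseteq> BUC"
  shows "0 \<le> (\<Sum>k. sup_norm (f k) * L1_norm (h k))"
proof (rule suminf_nonneg)
  show "summable (\<lambda>k. sup_norm (f k) * L1_norm (h k))"
    using rep by (simp add: A_rep_def)
  show "0 \<le> sup_norm (f k) * L1_norm (h k)" for k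
  proof -
    have "f k \<in> BUC"
      using rep \<open>S \<subseteq> BUC\<close> unfolding A_rep_def by blast
    then have "sup_norm (f k) \<ge> 0"
      by (intro sup_norm_nonneg) (simp add: BUC_def)
    then show ?thesis
      using L1_norm_nonneg by simp
  qed
qed

lemma A_norm_le:
  assumes "A_rep S F f h" and "S \<subseteq> BUC"
  shows "A_norm S F \<le> (\<Sum>k. sup_norm (f k) * L1_norm (h k))"
  unfolding A_norm_def
  by (rule cInf_lower) (use assms A_rep_cost_nonneg in \<open>auto intro!: bdd_belowI[of _ 0]\<close>)

lemma A_norm_nonneg:
  assumes "F \<in> A_space S" and "S \<subseteq> BUC"
  shows "A_norm S F \<ge> 0"
  using assms unfolding A_space_def A_norm_def
  by (auto intro!: cInf_greatest A_rep_cost_nonneg)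

lemma transfer_norm_le:
  assumes "X \<subseteq> Y" and K: "K > 0" and nonneg: "\<And>F. F \<in> Y \<Longrightarrow> N' F \<ge> 0"
    and bound: "\<And>F. F \<in> X \<Longrightarrow> N' F \<le> K * N F"
    and \<phi>: "\<phi> \<in> half_space X"
  shows "transfer_norm Y N' \<phi> \<le> K * transfer_norm X N \<phi>"
proof -
  have "transfer_norm Y N' \<phi> / K \<le> transfer_norm X N \<phi>"
    unfolding transfer_norm_def
  proof (rule cInf_greatest)
    show "{N F |F. F \<in> X \<and> tildeF F = \<phi>} \<noteq> {}"
      using \<phi> unfolding half_space_def by blast
    fix y
    assume "y \<in> {N F |F. F \<in> X \<and> tildeF F = \<phi>}"
    then obtain F where y: "y = N F" and F: "F \<in> X" "tildeF F = \<phi>"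
      by blast
    have "Inf {N' G |G. G \<in> Y \<and> tildeF G = \<phi>} \<le> N' F"
      using F \<open>X \<subseteq> Y\<close> nonneg by (intro cInf_lower bdd_belowI[of _ 0]) auto
    also have "\<dots> \<le> K * y"
      unfolding y by (rule bound[OF F(1)])
    finally show "Inf {N' G |G. G \<in> Y \<and> tildeF G = \<phi>} / K \<le> y"
      using K by (simp add: divide_le_eq mult.commute)
  qed
  then show ?thesis
    using K by (simp add: divide_le_eq mult.commute)
qed

lemma sums_int_decode:
  assumes "(f has_sum s) (UNIV :: int set)"
  shows "(\<lambda>n. f (int_decode n)) sums s"
proof -
  have "bij_betw int_decode UNIV UNIV"
    using bij_int_decode by (simp add: bij_def bij_betw_def)
  with assms show ?thesis
    by (intro has_sum_imp_sums) (simp add: has_sum_reindex_bij_betw)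
qed

section \<open>The dyadic pieces \<open>phi_k\<close>\<close>

locale admissible_window =
  fixes \<psi> :: "real \<Rightarrow> real"
  assumes admissible: "admissible \<psi>"
begin

lemma psi_eq_0: "t < 1/2 \<or> t > 2 \<Longrightarrow> \<psi> t = 0"
  using admissible unfolding admissible_def by auto

lemma psi_partition: "t \<in> {1..2} \<Longrightarrow> \<psi> t + \<psi> (t / 2) = 1"
  using admissible unfolding admissible_def by auto

lemma deriv_psi_has_derivative:
  "((deriv ^^ n) \<psi> has_real_derivative (deriv ^^ Suc n) \<psi> x) (at x)"
  using admissible unfolding admissible_def schwartz_def
  by (simp add: DERIV_deriv_iff_real_differentiable)

lemma continuous_on_deriv_psi: "continuous_on S ((deriv ^^ n) \<psi>)"
  by (meson deriv_psi_has_derivative DERIV_isCont continuous_at_imp_continuous_on)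

lemma continuous_on_psi: "continuous_on S \<psi>"
  using continuous_on_deriv_psi[of _ 0] by simp

lemma isCont_psi: "isCont \<psi> x"
  using continuous_on_psi[of UNIV] by (simp add: continuous_on_eq_continuous_at)

lemma psi_measurable [measurable]: "\<psi> \<in> borel_measurable borel"
  by (rule borel_measurable_continuous_onI[OF continuous_on_psi])

text \<open>By continuity, \<open>\<psi>\<close> also vanishes at the endpoints \<open>1/2\<close> and \<open>2\<close>.\<close>
lemma psi_eq_0_outside_Ioo: "t \<le> 1/2 \<or> t \<ge> 2 \<Longrightarrow> \<psi> t = 0"
proof -
  have closed: "closed {t. \<psi> t = 0}"
    using continuous_closed_preimage_constant[OF continuous_on_psi closed_UNIV] by simp
  have "closure {..<1/2} \<subseteq> {t. \<psi> t = 0}"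
    by (rule closure_minimal[OF _ closed]) (auto intro: psi_eq_0)
  moreover have "closure {2<..} \<subseteq> {t. \<psi> t = 0}"
    by (rule closure_minimal[OF _ closed]) (auto intro: psi_eq_0)
  ultimately show "t \<le> 1/2 \<or> t \<ge> 2 \<Longrightarrow> \<psi> t = 0"
    by auto
qed

lemma deriv_psi_eq_0:
  assumes "x < 1/2 \<or> x > 2"
  shows "(deriv ^^ 1) \<psi> x = 0"
proof -
  define d where "d = (if x < 1/2 then 1/2 - x else x - 2)"
  have "d > 0"
    unfolding d_def using assms by auto
  moreover have "\<psi> x = \<psi> y" if "\<bar>x - y\<bar> < d" for y
  proof -
    have "y < 1/2 \<or> y > 2"
      using assms that by (auto simp: d_def split: if_splits)
    then show ?thesis
      using assms psi_eq_0 by metis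
  qed
  ultimately show ?thesis
    using DERIV_local_const[OF deriv_psi_has_derivative[of 0 x]] by auto
qed

lemma psi_bounded: obtains M where "\<And>t. \<bar>\<psi> t\<bar> \<le> M"
proof -
  have "bounded (\<psi> ` {0..3})"
    by (rule compact_imp_bounded[OF compact_continuous_image[OF continuous_on_psi compact_Icc]])
  then obtain M where M: "\<forall>t\<in>{0..3}. \<bar>\<psi> t\<bar> \<le> M"
    unfolding bounded_iff by auto
  have "\<bar>\<psi> t\<bar> \<le> M" for t
  proof (cases "t \<in> {0..3}")
    case False
    then have "\<psi> t = 0"
      by (intro psi_eq_0) auto
    then show ?thesis
      using M by (metis abs_ge_zero abs_zero atLeastAtMost_iff order_trans zero_le_numeral order_refl)
  qed (use M in blast)
  then show ?thesis
    using that by blast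
qed

lemma
  shows integrable_psi: "integrable lborel (\<lambda>u. complex_of_real (\<psi> u) * cis (t * u))"
    and lborel_integral_psi:
      "(LINT u|lborel. complex_of_real (\<psi> u) * cis (t * u))
        = integral {0..3} (\<lambda>u. complex_of_real (\<psi> u) * cis (t * u))"
proof -
  have cont: "continuous_on {0..3} (\<lambda>u. complex_of_real (\<psi> u) * cis (t * u))"
    by (intro continuous_intros continuous_on_psi)
  have vanish: "u \<notin> {0..3} \<Longrightarrow> complex_of_real (\<psi> u) * cis (t * u) = 0" for u
    using psi_eq_0[of u] by auto
  show "integrable lborel (\<lambda>u. complex_of_real (\<psi> u) * cis (t * u))"
    by (rule integrable_lborel_vanishing_outside_Icc[OF cont vanish])
  show "(LINT u|lborel. complex_of_real (\<psi> u) * cis (t * u))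
      = integral {0..3} (\<lambda>u. complex_of_real (\<psi> u) * cis (t * u))"
    by (rule lborel_integral_vanishing_outside_Icc[OF cont vanish])
qed

definition deriv_psi_transform :: "nat \<Rightarrow> real \<Rightarrow> complex" where
  "deriv_psi_transform n t = integral {0..3} (\<lambda>u. complex_of_real ((deriv ^^ n) \<psi> u) * cis (t * u))"

lemma deriv_psi_transform_Suc:
  assumes "n \<le> 1"
  shows "deriv_psi_transform (Suc n) t = - (\<i> * of_real t) * deriv_psi_transform n t"
proof -
  have "(deriv ^^ n) \<psi> 0 = 0 \<and> (deriv ^^ n) \<psi> 3 = 0"
    using assms psi_eq_0 deriv_psi_eq_0 by (cases n) auto
  then show ?thesis
    unfolding deriv_psi_transform_def
    by (intro integral_by_parts_cis deriv_psi_has_derivative continuous_on_deriv_psi) auto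
qed

lemma deriv_psi_transform_bounded: obtains C where "\<And>t. norm (deriv_psi_transform n t) \<le> C"
proof
  have int: "(\<lambda>u. \<bar>(deriv ^^ n) \<psi> u\<bar>) integrable_on {0..3}"
    by (intro integrable_continuous_interval continuous_intros continuous_on_deriv_psi)
  show "norm (deriv_psi_transform n t) \<le> integral {0..3} (\<lambda>u. \<bar>(deriv ^^ n) \<psi> u\<bar>)" for t
    unfolding deriv_psi_transform_def
    by (rule integral_norm_bound_integral[OF _ int])
       (auto intro!: integrable_continuous_interval continuous_intros continuous_on_deriv_psi
         simp: norm_mult)
qed

text \<open>Two integrations by parts give the \<open>1 / (1 + t\<^sup>2)\<close> decay of \<open>phi_k \<psi> 0\<close>.\<close>
lemma psi_transform_decay: obtains C where "\<And>t. norm (deriv_psi_transform 0 t) * (1 + t\<^sup>2) \<le> C"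
proof -
  obtain C0 where C0: "\<And>t. norm (deriv_psi_transform 0 t) \<le> C0"
    using deriv_psi_transform_bounded[where n=0] by blast
  obtain C2 where C2: "\<And>t. norm (deriv_psi_transform 2 t) \<le> C2"
    using deriv_psi_transform_bounded[where n=2] by blast
  have "deriv_psi_transform 2 t = - of_real (t\<^sup>2) * deriv_psi_transform 0 t" for t
    using deriv_psi_transform_Suc[of 1 t] deriv_psi_transform_Suc[of 0 t]
    by (simp add: numeral_2_eq_2 power2_eq_square algebra_simps)
  then have C2': "norm (deriv_psi_transform 0 t) * t\<^sup>2 \<le> C2" for t
    using C2[of t] by (simp add: norm_mult norm_power mult.commute)
  have "norm (deriv_psi_transform 0 t) * (1 + t\<^sup>2) \<le> C0 + C2" for t
    using add_mono[OF C0[of t] C2'[of t]] by (simp add: algebra_simps)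
  then show ?thesis
    using that by blast
qed

lemma phi_k_0_eq: "phi_k \<psi> 0 t = complex_of_real (1 / (2 * pi)) * deriv_psi_transform 0 t"
  unfolding phi_k_def inv_fourier_def psi_k_def deriv_psi_transform_def
  using lborel_integral_psi[of t] by (simp add: mult.commute)

lemma phi_k_measurable [measurable]: "phi_k \<psi> k \<in> borel_measurable borel"
  unfolding phi_k_def psi_k_def by measurable

lemma integrable_phi_k_0: "integrable lborel (phi_k \<psi> 0)"
proof -
  obtain C where C: "\<And>t. norm (deriv_psi_transform 0 t) * (1 + t\<^sup>2) \<le> C"
    using psi_transform_decay by blast
  have "0 \<le> norm (deriv_psi_transform 0 0) * (1 + 0\<^sup>2)"
    by simp
  then have "C \<ge> 0"
    using C[of 0] by linarith
  show ?thesis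
  proof (rule Bochner_Integration.integrable_bound)
    show "integrable lborel (\<lambda>t. C / (2 * pi) * inverse (1 + t\<^sup>2))"
      using integrable_inverse_1_plus_square_lborel by simp
    show "AE t in lborel. norm (phi_k \<psi> 0 t) \<le> norm (C / (2 * pi) * inverse (1 + t\<^sup>2))"
    proof (rule AE_I2)
      fix t :: real
      have pos: "1 + t\<^sup>2 > 0"
        by (simp add: add_pos_nonneg)
      have "norm (phi_k \<psi> 0 t) = norm (deriv_psi_transform 0 t) / (2 * pi)"
        by (simp add: phi_k_0_eq norm_mult norm_divide)
      also have "\<dots> \<le> C / (1 + t\<^sup>2) / (2 * pi)"
        using C[of t] pos by (intro divide_right_mono) (auto simp: field_simps)
      also have "\<dots> = norm (C / (2 * pi) * inverse (1 + t\<^sup>2))"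
        using \<open>C \<ge> 0\<close> pos by (simp add: field_simps)
      finally show "norm (phi_k \<psi> 0 t) \<le> norm (C / (2 * pi) * inverse (1 + t\<^sup>2))" .
    qed
  qed simp
qed

lemma phi_k_dilation:
  "phi_k \<psi> k t = complex_of_real (2 powr k) * phi_k \<psi> 0 (2 powr k * t)"
proof -
  define c where "c = 2 powr real_of_int k"
  have "c > 0"
    by (simp add: c_def)
  have "(LINT u|lborel. complex_of_real (\<psi> (2 powr (- real_of_int k) * u)) * cis (t * u))
      = c *\<^sub>R (LINT x|lborel. complex_of_real (\<psi> (2 powr (- real_of_int k) * (0 + c * x))) * cis (t * (0 + c * x)))"
    using lborel_integral_real_affine[of c "\<lambda>u. complex_of_real (\<psi> (2 powr (- real_of_int k) * u)) * cis (t * u)" 0]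
      \<open>c > 0\<close> by simp
  also have "(\<lambda>x. complex_of_real (\<psi> (2 powr (- real_of_int k) * (0 + c * x))) * cis (t * (0 + c * x)))
      = (\<lambda>x. complex_of_real (\<psi> x) * cis ((c * t) * x))"
  proof
    fix x
    have "2 powr (- real_of_int k) * (0 + c * x) = (2 powr (- real_of_int k) * c) * x"
      by (simp only: add_0_left mult.assoc)
    also have "\<dots> = x"
      by (simp add: c_def powr_minus)
    finally have arg: "2 powr (- real_of_int k) * (0 + c * x) = x" .
    have "cis (t * (0 + c * x)) = cis ((c * t) * x)"
      by (simp add: mult_ac)
    then show "complex_of_real (\<psi> (2 powr (- real_of_int k) * (0 + c * x))) * cis (t * (0 + c * x))
        = complex_of_real (\<psi> x) * cis ((c * t) * x)"
      by (simp only: arg)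
  qed
  finally show ?thesis
    unfolding phi_k_def inv_fourier_def psi_k_def c_def[symmetric]
    by (simp add: scaleR_conv_of_real mult_ac)
qed

lemma integrable_phi_k: "integrable lborel (phi_k \<psi> k)"
proof -
  have "integrable lborel (\<lambda>t. phi_k \<psi> 0 (0 + 2 powr k * t))"
    by (rule lborel_integrable_real_affine[OF integrable_phi_k_0]) simp
  then show ?thesis
    by (subst phi_k_dilation[abs_def]) simp
qed

lemma L1_norm_phi_k: "L1_norm (phi_k \<psi> k) = L1_norm (phi_k \<psi> 0)"
proof -
  define c where "c = 2 powr real_of_int k"
  have "c > 0"
    by (simp add: c_def)
  have "L1_norm (phi_k \<psi> 0) = c *\<^sub>R (LINT t|lborel. norm (phi_k \<psi> 0 (0 + c * t)))"
    unfolding L1_norm_def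
    using lborel_integral_real_affine[of c "\<lambda>t. norm (phi_k \<psi> 0 t)" 0] \<open>c > 0\<close> by simp
  also have "\<dots> = L1_norm (phi_k \<psi> k)"
    unfolding L1_norm_def phi_k_dilation[of k] c_def[symmetric] using \<open>c > 0\<close> by (simp add: norm_mult)
  finally show ?thesis ..
qed

lemma integrable_psi_k: "integrable lborel (\<lambda>u. complex_of_real (psi_k \<psi> k u))"
proof -
  have "integrable lborel (\<lambda>u. complex_of_real (\<psi> u))"
    using integrable_psi[of 0] by simp
  then have "integrable lborel (\<lambda>u. complex_of_real (\<psi> (0 + 2 powr (- real_of_int k) * u)))"
    by (rule lborel_integrable_real_affine) simp
  then show ?thesis
    unfolding psi_k_def by simp
qed

lemma fourier_phi_k: "fourier (phi_k \<psi> k) u = complex_of_real (psi_k \<psi> k u)"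
proof -
  obtain M where M: "\<And>t. \<bar>\<psi> t\<bar> \<le> M"
    using psi_bounded by blast
  show ?thesis
    unfolding phi_k_def
  proof (rule fourier_inv_fourier[where M=M])
    show "isCont (\<lambda>u. complex_of_real (psi_k \<psi> k u)) u"
      unfolding psi_k_def by (intro continuous_intros isCont_o2[OF _ isCont_psi])
    show "norm (complex_of_real (psi_k \<psi> k t)) \<le> M" for t
      unfolding psi_k_def using M by simp
    show "integrable lborel (inv_fourier (\<lambda>u. complex_of_real (psi_k \<psi> k u)))"
      using integrable_phi_k[of k] unfolding phi_k_def .
    show "(\<lambda>u. complex_of_real (psi_k \<psi> k u)) \<in> borel_measurable borel"
      unfolding psi_k_def by measurable
  qed (rule integrable_psi_k)
qed

section \<open>Besov functions as sums of \<open>H1\<close> convolutions\<close>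

definition chi_k :: "int \<Rightarrow> real \<Rightarrow> complex" where
  "chi_k k t = phi_k \<psi> (k - 1) t + phi_k \<psi> k t + phi_k \<psi> (k + 1) t"

lemma integrable_chi_k: "integrable lborel (chi_k k)"
  unfolding chi_k_def[abs_def] using integrable_phi_k by simp

lemma chi_k_measurable [measurable]: "chi_k k \<in> borel_measurable borel"
  unfolding chi_k_def[abs_def] by measurable

lemma fourier_chi_k:
  "fourier (chi_k k) u = complex_of_real (psi_k \<psi> (k - 1) u + psi_k \<psi> k u + psi_k \<psi> (k + 1) u)"
  unfolding chi_k_def[abs_def]
  by (simp add: fourier_add integrable_phi_k fourier_phi_k)

lemma chi_k_H1: "chi_k k \<in> H1"
proof -
  have "psi_k \<psi> j u = 0" if "u \<le> 0" for j u
  proof -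
    have "2 powr (- real_of_int j) * u \<le> 0"
      using that by (simp add: mult_nonneg_nonpos)
    then show ?thesis
      unfolding psi_k_def by (intro psi_eq_0) linarith
  qed
  then show ?thesis
    unfolding H1_def using integrable_chi_k[of k] by (auto simp: fourier_chi_k)
qed

lemma psi_k_neighbours:
  "psi_k \<psi> k u * (psi_k \<psi> (k - 1) u + psi_k \<psi> k u + psi_k \<psi> (k + 1) u) = psi_k \<psi> k u"
proof -
  define s where "s = 2 powr (- real_of_int k) * u"
  have "2 powr (- real_of_int (k - 1)) = 2 * 2 powr (- real_of_int k)"
    using powr_add[of 2 1 "- real_of_int k"] by simp
  then have down: "2 powr (- real_of_int (k - 1)) * u = 2 * s"
    unfolding s_def by simp
  have up: "2 powr (- real_of_int (k + 1)) * u = s / 2"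
    unfolding s_def by (simp add: powr_diff)
  have "psi_k \<psi> (k - 1) u = \<psi> (2 * s)" "psi_k \<psi> (k + 1) u = \<psi> (s / 2)"
    "psi_k \<psi> k u = \<psi> s"
    unfolding psi_k_def by (simp_all only: down up s_def)
  moreover have "\<psi> (2 * s) + \<psi> s + \<psi> (s / 2) = 1" if "\<psi> s \<noteq> 0"
  proof -
    have s: "1/2 < s \<and> s < 2"
      using that psi_eq_0_outside_Ioo[of s] by linarith
    show ?thesis
    proof (cases "s \<ge> 1")
      case True
      then show ?thesis
        using s psi_partition[of s] psi_eq_0_outside_Ioo[of "2 * s"] by auto
    next
      case False
      then show ?thesis
        using s psi_partition[of "2 * s"] psi_eq_0_outside_Ioo[of "s / 2"] by auto
    qed
  qed
  ultimately show ?thesis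
    by (cases "\<psi> s = 0") simp_all
qed

lemma conv_phi_k_chi_k: "conv (phi_k \<psi> k) (chi_k k) x = phi_k \<psi> k x"
  unfolding phi_k_def
proof (rule conv_inv_fourier)
  show "(\<lambda>u. complex_of_real (psi_k \<psi> k u)) \<in> borel_measurable borel"
    unfolding psi_k_def by measurable
  show "integrable lborel (\<lambda>u. complex_of_real (psi_k \<psi> k u))"
    by (rule integrable_psi_k)
  show "chi_k k \<in> borel_measurable borel"
    by measurable
  show "integrable lborel (chi_k k)"
    by (rule integrable_chi_k)
  show "complex_of_real (psi_k \<psi> k u) * fourier (chi_k k) u = complex_of_real (psi_k \<psi> k u)" for u
    unfolding fourier_chi_k of_real_mult[symmetric] psi_k_neighbours ..
qed

lemma L1_norm_chi_k_le: "L1_norm (chi_k k) \<le> 3 * L1_norm (phi_k \<psi> 0)"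
proof -
  note int = integrable_phi_k
  have "L1_norm (chi_k k)
      \<le> L1_norm (\<lambda>t. phi_k \<psi> (k - 1) t + phi_k \<psi> k t) + L1_norm (phi_k \<psi> (k + 1))"
    unfolding chi_k_def[abs_def]
    by (rule L1_norm_add_le[OF Bochner_Integration.integrable_add[OF int int] int])
  also have "\<dots> \<le> L1_norm (phi_k \<psi> (k - 1)) + L1_norm (phi_k \<psi> k) + L1_norm (phi_k \<psi> (k + 1))"
    by (rule add_right_mono[OF L1_norm_add_le[OF int int]])
  also have "\<dots> = 3 * L1_norm (phi_k \<psi> 0)"
    using L1_norm_phi_k[of "k - 1"] L1_norm_phi_k[of k] L1_norm_phi_k[of "k + 1"] by linarith
  finally show ?thesis .
qed

lemma conv_conv_phi_k_chi_k:
  assumes "F \<in> BUC"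
  shows "conv (conv F (phi_k \<psi> k)) (chi_k k) x = conv F (phi_k \<psi> k) x"
proof -
  obtain M where M: "\<And>x. norm (F x) \<le> M"
    using BUC_bounded[OF assms] by blast
  have "conv (conv F (phi_k \<psi> k)) (chi_k k) x = conv F (conv (phi_k \<psi> k) (chi_k k)) x"
    by (rule conv_assoc[OF BUC_measurable[OF assms] M phi_k_measurable integrable_phi_k
          chi_k_measurable integrable_chi_k])
  also have "conv (phi_k \<psi> k) (chi_k k) = phi_k \<psi> k"
    by (rule ext, rule conv_phi_k_chi_k)
  finally show ?thesis .
qed

lemma conv_phi_k_BUC: "F \<in> BUC \<Longrightarrow> conv F (phi_k \<psi> k) \<in> BUC"
  by (rule conv_BUC[OF _ phi_k_measurable integrable_phi_k])

lemma normB_R_nonneg: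
  assumes "F \<in> B_R \<psi>"
  shows "normB_R \<psi> F \<ge> 0"
proof -
  have "conv F (phi_k \<psi> k) \<in> BUC" for k
    using assms by (intro conv_phi_k_BUC) (simp add: B_R_def)
  then show ?thesis
    unfolding normB_R_def by (intro infsum_nonneg sup_norm_nonneg) (simp add: BUC_def)
qed

lemma Besov_A_rep:
  assumes F: "F \<in> B_R \<psi>" and S: "\<And>k. conv F (phi_k \<psi> k) \<in> S"
  defines "f \<equiv> \<lambda>n. conv F (phi_k \<psi> (int_decode n))" and "h \<equiv> \<lambda>n. chi_k (int_decode n)"
  shows "A_rep S F f h"
    and "(\<Sum>n. sup_norm (f n) * L1_norm (h n)) \<le> 3 * L1_norm (phi_k \<psi> 0) * normB_R \<psi> F"
proof -
  define a where "a k = sup_norm (conv F (phi_k \<psi> k))" for k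
  define K where "K = 3 * L1_norm (phi_k \<psi> 0)"
  have F_BUC: "F \<in> BUC"
    using F by (simp add: B_R_def)
  have a_nonneg: "a k \<ge> 0" for k
    unfolding a_def using conv_phi_k_BUC[OF F_BUC] by (intro sup_norm_nonneg) (simp add: BUC_def)
  have "a summable_on UNIV"
    using F by (simp add: B_R_def a_def[abs_def])
  then have "(\<lambda>n. a (int_decode n)) sums normB_R \<psi> F"
    unfolding normB_R_def a_def[symmetric] by (intro sums_int_decode has_sum_infsum)
  then have K_sums: "(\<lambda>n. K * a (int_decode n)) sums (K * normB_R \<psi> F)"
    by (rule sums_mult)
  have term_le: "sup_norm (f n) * L1_norm (h n) \<le> K * a (int_decode n)" for n
    unfolding f_def h_def K_def a_def[symmetric]
    using mult_left_mono[OF L1_norm_chi_k_le a_nonneg] by (simp add: mult.commute)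
  have summable: "summable (\<lambda>n. sup_norm (f n) * L1_norm (h n))"
    using a_nonneg L1_norm_nonneg term_le
    by (intro summable_comparison_test'[OF sums_summable[OF K_sums]]) (simp add: f_def h_def a_def)
  show "A_rep S F f h"
    unfolding A_rep_def
  proof (intro conjI allI summable)
    show "f k \<in> S" "h k \<in> H1" for k
      unfolding f_def h_def by (simp_all add: S chi_k_H1)
    have "((\<lambda>k. conv F (phi_k \<psi> k) x) has_sum F x) UNIV" for x
      using F by (simp add: B_R_def)
    then show "(\<lambda>k. conv (f k) (h k) x) sums F x" for x
      unfolding f_def h_def conv_conv_phi_k_chi_k[OF F_BUC] by (rule sums_int_decode)
  qed
  have "(\<Sum>n. sup_norm (f n) * L1_norm (h n)) \<le> (\<Sum>n. K * a (int_decode n))"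
    by (rule suminf_le[OF term_le summable sums_summable[OF K_sums]])
  also have "\<dots> = K * normB_R \<psi> F"
    using K_sums by (simp add: sums_iff)
  finally show "(\<Sum>n. sup_norm (f n) * L1_norm (h n)) \<le> 3 * L1_norm (phi_k \<psi> 0) * normB_R \<psi> F"
    by (simp add: K_def)
qed

lemma B_R_subset_A_R: "B_R \<psi> \<subseteq> A_R"
proof
  fix F
  assume F: "F \<in> B_R \<psi>"
  then have "conv F (phi_k \<psi> k) \<in> BUC" for k
    by (intro conv_phi_k_BUC) (simp add: B_R_def)
  then show "F \<in> A_R"
    unfolding A_space_def using Besov_A_rep(1)[OF F] by blast
qed

lemma B0_R_subset_A0_R: "B0_R \<psi> \<subseteq> A0_R"
proof
  fix F
  assume "F \<in> B0_R \<psi>"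
  then have F: "F \<in> B_R \<psi>" "F \<in> BUC" "F \<in> C0"
    by (simp_all add: B0_R_def B_R_def)
  then have "conv F (phi_k \<psi> k) \<in> C0" for k
    by (intro conv_C0 phi_k_measurable integrable_phi_k)
  then show "F \<in> A0_R"
    unfolding A_space_def using Besov_A_rep(1)[OF F(1)] by blast
qed

lemma normA_R_le_normB_R:
  assumes "F \<in> B_R \<psi>"
  shows "normA_R F \<le> 3 * L1_norm (phi_k \<psi> 0) * normB_R \<psi> F"
proof -
  have S: "conv F (phi_k \<psi> k) \<in> BUC" for k
    using assms by (intro conv_phi_k_BUC) (simp add: B_R_def)
  have "normA_R F \<le> (\<Sum>n. sup_norm (conv F (phi_k \<psi> (int_decode n))) * L1_norm (chi_k (int_decode n)))"
    by (rule A_norm_le[OF Besov_A_rep(1)[OF assms S]]) simp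
  also have "\<dots> \<le> 3 * L1_norm (phi_k \<psi> 0) * normB_R \<psi> F"
    by (rule Besov_A_rep(2)[OF assms S])
  finally show ?thesis .
qed

end

theorem mainTheorem14:
  fixes \<psi> :: "real \<Rightarrow> real"
  assumes "admissible \<psi>"
  shows "B_C \<psi> \<subseteq> A_C \<and> B0_C \<psi> \<subseteq> A0_C
    \<and> (\<exists>K>0. \<forall>\<phi>\<in>B_C \<psi>. normA_C \<phi> \<le> K * normB_C \<psi> \<phi>)"
proof -
  interpret admissible_window \<psi>
    by (rule admissible_window.intro[OF assms])
  define K where "K = 3 * L1_norm (phi_k \<psi> 0) + 1"
  have "K > 0"
    unfolding K_def using L1_norm_nonneg[of "phi_k \<psi> 0"] by linarith
  have "normA_R F \<le> K * normB_R \<psi> F" if "F \<in> B_R \<psi>" for F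
    using normA_R_le_normB_R[OF that] normB_R_nonneg[OF that] by (simp add: K_def algebra_simps)
  then have "\<forall>\<phi>\<in>B_C \<psi>. normA_C \<phi> \<le> K * normB_C \<psi> \<phi>"
    using B_R_subset_A_R \<open>K > 0\<close> A_norm_nonneg[of _ BUC]
    by (intro ballI transfer_norm_le) auto
  moreover have "B_C \<psi> \<subseteq> A_C" "B0_C \<psi> \<subseteq> A0_C"
    unfolding half_space_def using B_R_subset_A_R B0_R_subset_A0_R by (simp_all add: image_mono)
  ultimately show ?thesis
    using \<open>K > 0\<close> by blast
qed

end
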